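(* For all formulas $\varphi,\psi,\vartheta$ the following semantic equivalences hold (in every $\mathcal L$-model): $$\forall(\varphi\Rightarrow\psi).\vartheta\ \equiv\ (\varphi\wedge\forall\Omega.\forall\psi.\vartheta)\vee\forall\Omega.\vartheta,$$ $$\neg\forall(\varphi\Rightarrow\psi).\vartheta\ \equiv\ (\neg\varphi\wedge\neg\forall\Omega.\vartheta)\vee\neg\forall\Omega.\forall\psi.\vartheta.$$
   Context: Fix countable, nonempty, pairwise disjoint sets $\mathrm{AtF}$ (atomic formulas), $\mathrm{AtP}$ (atomic programs) and $I$ (agent names). The formulas $\mathcal L_s$ and programs $\mathcal L_a$ of Type PDL ($\tau$PDL) are generated by $\varphi::=p\mid\neg\varphi\mid\forall A.\varphi\mid \mathsf C_\imath A$ and $A::=a\mid\varphi\mid\varphi\Rightarrow\varphi\mid AA\mid A+A\mid A^*$ with $p\in\mathrm{AtF}$, $a\in\mathrm{AtP}$, $\imath\in I$ (a formula used as a program is a test; $AB$ is sequential composition, $A+B$ choice, $\forall A.\varphi$ is the box $[A]\varphi$). Other connectives are abbreviations, e.g. $\varphi\to\psi:=\forall\varphi.\psi$. $\mathsf{tt}$ is a fixed tautology, $\mathsf{ff}=\neg\mathsf{tt}$, $\Omega:=\mathsf{tt}\Rightarrow\mathsf{tt}$. $\Sigma$ is the set of programs of the forms $a$, $\varphi$, $\varphi\Rightarrow\psi$; $\Sigma^+$ the finite nonempty sequential compositions of elements of $\Sigma$. An $\mathcal L$-model $M$ consists of a nonempty set $W$, a relation $\to_a\subseteq W\times W$ for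 each $a\in\mathrm{AtP}$, a valuation $\rho:\mathrm{AtF}\to2^W$, and for each $\imath\in I$, $w\in W$ a set $\imath^M(w)\subseteq\bigcup\{\to_A:A\in\Sigma^+\}$. Interpretation: $[\![p]\!]=\rho(p)$, $[\![\neg\varphi]\!]=W\setminus[\![\varphi]\!]$, $[\![\forall A.\varphi]\!]=\{w:\forall w'(w\to_Aw'\Rightarrow w'\in[\![\varphi]\!])\}$; $\to_\varphi=\{(w,w):w\in[\![\varphi]\!]\}$, $\to_{AB}=\to_A\circ\to_B$ (first $A$ then $B$), $\to_{A+B}=\to_A\cup\to_B$, $\to_{A^*}=\bigcup_{n\ge0}(\to_A)^n$, $\to_{\varphi\Rightarrow\psi}=\bigcup\{\to_A: A\in\Sigma^+,\ \forall w\in[\![\varphi]\!]\,\forall w'(w\to_Aw'\Rightarrow w'\in[\![\psi]\!])\}$. (Capabilities are interpreted as in the standard relational semantics of $\tau$PDL but play no role here.) $\varphi\equiv\psi$ means $[\![\varphi]\!]=[\![\psi]\!]$ in every $\mathcal L$-model. *)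

theory Defs
  imports "HOL-Library.Countable"
begin

text \<open>Syntax of Type PDL.  'p = atomic formulas, 'a = atomic programs, 'i = agent names.\<close>

datatype ('p, 'a, 'i) fm =
    Atom 'p
  | Neg "('p, 'a, 'i) fm"
  | Box "('p, 'a, 'i) prog" "('p, 'a, 'i) fm"
  | Cap 'i "('p, 'a, 'i) prog"
and ('p, 'a, 'i) prog =
    AProg 'a
  | Test "('p, 'a, 'i) fm"
  | Arr "('p, 'a, 'i) fm" "('p, 'a, 'i) fm"
  | Seq "('p, 'a, 'i) prog" "('p, 'a, 'i) prog"
  | Choice "('p, 'a, 'i) prog" "('p, 'a, 'i) prog"
  | Star "('p, 'a, 'i) prog"

definition Imp :: "('p, 'a, 'i) fm \<Rightarrow> ('p, 'a, 'i) fm \<Rightarrow> ('p, 'a, 'i) fm" where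
  "Imp \<phi> \<psi> = Box (Test \<phi>) \<psi>"

definition Conj :: "('p, 'a, 'i) fm \<Rightarrow> ('p, 'a, 'i) fm \<Rightarrow> ('p, 'a, 'i) fm" where
  "Conj \<phi> \<psi> = Neg (Imp \<phi> (Neg \<psi>))"

definition Disj :: "('p, 'a, 'i) fm \<Rightarrow> ('p, 'a, 'i) fm \<Rightarrow> ('p, 'a, 'i) fm" where
  "Disj \<phi> \<psi> = Imp (Neg \<phi>) \<psi>"

definition tt :: "('p, 'a, 'i) fm" where
  "tt = Imp (Atom undefined) (Atom undefined)"

definition Omega :: "('p, 'a, 'i) prog" where
  "Omega = Arr tt tt"

fun inSigma :: "('p, 'a, 'i) prog \<Rightarrow> bool" where
  "inSigma (AProg a) = True"
| "inSigma (Test \<phi>) = True"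
| "inSigma (Arr \<phi> \<psi>) = True"
| "inSigma _ = False"

inductive SigmaPlus :: "('p, 'a, 'i) prog \<Rightarrow> bool" where
  base: "inSigma A \<Longrightarrow> SigmaPlus A"
| seq: "SigmaPlus A \<Longrightarrow> SigmaPlus B \<Longrightarrow> SigmaPlus (Seq A B)"

text \<open>A model has the world set W = UNIV :: 'w set (nonempty as every HOL type),
  relations R a, valuation V and capability assignments C.  Since the semantic
  clause for arrows is impredicative (it quantifies over all Sigma-plus programs),
  the interpretation (S for formulas, T for programs) is specified as any pair of
  functions satisfying all the semantic clauses.  The clause for capabilities is
  left unconstrained (capabilities play no role here).\<close>

definition is_interp ::
  "('a \<Rightarrow> ('w \<times> 'w) set) \<Rightarrow> ('p \<Rightarrow> 'w set) \<Rightarrow> ('i \<Rightarrow> 'w \<Rightarrow> ('w \<times> 'w) set)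
   \<Rightarrow> (('p, 'a, 'i) fm \<Rightarrow> 'w set) \<Rightarrow> (('p, 'a, 'i) prog \<Rightarrow> ('w \<times> 'w) set) \<Rightarrow> bool" where
  "is_interp R V C S T \<longleftrightarrow>
     (\<forall>p. S (Atom p) = V p) \<and>
     (\<forall>\<phi>. S (Neg \<phi>) = - S \<phi>) \<and>
     (\<forall>A \<phi>. S (Box A \<phi>) = {w. \<forall>w'. (w, w') \<in> T A \<longrightarrow> w' \<in> S \<phi>}) \<and>
     (\<forall>a. T (AProg a) = R a) \<and>
     (\<forall>\<phi>. T (Test \<phi>) = {(w, w) | w. w \<in> S \<phi>}) \<and>
     (\<forall>A B. T (Seq A B) = T A O T B) \<and>
     (\<forall>A B. T (Choice A B) = T A \<union> T B) \<and>
     (\<forall>A. T (Star A) = (\<Union>n. T A ^^ n)) \<and>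
     (\<forall>\<phi> \<psi>. T (Arr \<phi> \<psi>) = \<Union>{T A | A. SigmaPlus A \<and>
         (\<forall>w \<in> S \<phi>. \<forall>w'. (w, w') \<in> T A \<longrightarrow> w' \<in> S \<psi>)}) \<and>
     (\<forall>i w. C i w \<subseteq> \<Union>{T A | A. SigmaPlus A})"

end

theory Submission
  imports Defs
begin

text \<open>An arrow \<open>\<phi> \<Rightarrow> \<psi>\<close> relates exactly those pairs reachable by some \<open>\<Sigma>\<^sup>+\<close> program
  whose endpoints respect the implication: a single \<open>\<Sigma>\<^sup>+\<close> step \<open>A\<close> from \<open>w\<close> to \<open>w'\<close>
  can be guarded by composing it with the test \<open>\<psi>\<close> (if \<open>w' \<in> \<psi>\<close>) or by prefixing the
  test \<open>\<not>\<phi>\<close> (if \<open>w \<notin> \<phi>\<close>), and the guarded program satisfies the arrow's side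
  condition.  Since \<open>\<Omega>\<close> is the arrow between tautologies, it is the union of all
  \<open>\<Sigma>\<^sup>+\<close> relations, and both equivalences become propositional statements about
  the \<open>\<Omega>\<close>-successors of a world.\<close>

definition sigma_plus_rel :: "(('p, 'a, 'i) prog \<Rightarrow> ('w \<times> 'w) set) \<Rightarrow> ('w \<times> 'w) set" where
  "sigma_plus_rel T = \<Union>{T A | A. SigmaPlus A}"

context
  fixes R :: "'a \<Rightarrow> ('w \<times> 'w) set"
    and V :: "'p \<Rightarrow> 'w set"
    and C :: "'i \<Rightarrow> 'w \<Rightarrow> ('w \<times> 'w) set"
    and S :: "('p, 'a, 'i) fm \<Rightarrow> 'w set"
    and T :: "('p, 'a, 'i) prog \<Rightarrow> ('w \<times> 'w) set"
  assumes interp: "is_interp R V C S T"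
begin

lemma mem_S_Neg: "w \<in> S (Neg \<chi>) \<longleftrightarrow> w \<notin> S \<chi>"
  using interp unfolding is_interp_def by simp

lemma mem_S_Box: "w \<in> S (Box A \<chi>) \<longleftrightarrow> (\<forall>w'. (w, w') \<in> T A \<longrightarrow> w' \<in> S \<chi>)"
  using interp unfolding is_interp_def by simp

lemma mem_T_Test: "(w, w') \<in> T (Test \<chi>) \<longleftrightarrow> w = w' \<and> w \<in> S \<chi>"
  using interp unfolding is_interp_def by auto

lemma mem_T_Seq: "(w, w') \<in> T (Seq A B) \<longleftrightarrow> (\<exists>v. (w, v) \<in> T A \<and> (v, w') \<in> T B)"
  using interp unfolding is_interp_def by (simp add: relcomp_unfold)

lemma mem_S_Imp: "w \<in> S (Imp \<chi> \<xi>) \<longleftrightarrow> (w \<in> S \<chi> \<longrightarrow> w \<in> S \<xi>)"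
  unfolding Imp_def mem_S_Box mem_T_Test by blast

lemma mem_S_Conj: "w \<in> S (Conj \<chi> \<xi>) \<longleftrightarrow> w \<in> S \<chi> \<and> w \<in> S \<xi>"
  unfolding Conj_def mem_S_Imp mem_S_Neg by simp

lemma mem_S_Disj: "w \<in> S (Disj \<chi> \<xi>) \<longleftrightarrow> w \<in> S \<chi> \<or> w \<in> S \<xi>"
  unfolding Disj_def mem_S_Imp mem_S_Neg by blast

lemma guarded_sigma_plus_step:
  assumes "(w, w') \<in> sigma_plus_rel T" and "w \<in> S \<phi> \<longrightarrow> w' \<in> S \<psi>"
  obtains B where "SigmaPlus B" and "(w, w') \<in> T B"
    and "\<forall>v \<in> S \<phi>. \<forall>v'. (v, v') \<in> T B \<longrightarrow> v' \<in> S \<psi>"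
proof -
  from assms(1) obtain A where A: "SigmaPlus A" "(w, w') \<in> T A"
    unfolding sigma_plus_rel_def by blast
  show thesis
  proof (cases "w \<in> S \<phi>")
    case True
    with assms(2) have "w' \<in> S \<psi>" by blast
    show thesis
    proof (rule that[of "Seq A (Test \<psi>)"])
      show "SigmaPlus (Seq A (Test \<psi>))"
        using A(1) by (simp add: SigmaPlus.seq SigmaPlus.base)
      show "(w, w') \<in> T (Seq A (Test \<psi>))"
        using A(2) \<open>w' \<in> S \<psi>\<close> by (simp add: mem_T_Seq mem_T_Test)
    qed (simp add: mem_T_Seq mem_T_Test)
  next
    case False
    show thesis
    proof (rule that[of "Seq (Test (Neg \<phi>)) A"])
      show "SigmaPlus (Seq (Test (Neg \<phi>)) A)"
        using A(1) by (simp add: SigmaPlus.seq SigmaPlus.base)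
      show "(w, w') \<in> T (Seq (Test (Neg \<phi>)) A)"
        using A(2) False by (simp add: mem_T_Seq mem_T_Test mem_S_Neg)
    qed (simp add: mem_T_Seq mem_T_Test mem_S_Neg)
  qed
qed

lemma mem_T_Arr:
  "(w, w') \<in> T (Arr \<phi> \<psi>) \<longleftrightarrow> (w, w') \<in> sigma_plus_rel T \<and> (w \<in> S \<phi> \<longrightarrow> w' \<in> S \<psi>)"
proof -
  have T_Arr: "T (Arr \<phi> \<psi>) = \<Union>{T A | A. SigmaPlus A \<and>
      (\<forall>v \<in> S \<phi>. \<forall>v'. (v, v') \<in> T A \<longrightarrow> v' \<in> S \<psi>)}"
    using interp unfolding is_interp_def by blast
  show ?thesis
  proof
    assume "(w, w') \<in> T (Arr \<phi> \<psi>)"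
    then show "(w, w') \<in> sigma_plus_rel T \<and> (w \<in> S \<phi> \<longrightarrow> w' \<in> S \<psi>)"
      unfolding T_Arr sigma_plus_rel_def by blast
  next
    assume "(w, w') \<in> sigma_plus_rel T \<and> (w \<in> S \<phi> \<longrightarrow> w' \<in> S \<psi>)"
    then obtain B where "SigmaPlus B" "(w, w') \<in> T B"
        "\<forall>v \<in> S \<phi>. \<forall>v'. (v, v') \<in> T B \<longrightarrow> v' \<in> S \<psi>"
      by (elim conjE guarded_sigma_plus_step)
    then show "(w, w') \<in> T (Arr \<phi> \<psi>)"
      unfolding T_Arr by blast
  qed
qed

lemma mem_T_Omega: "(w, w') \<in> T Omega \<longleftrightarrow> (w, w') \<in> sigma_plus_rel T"
  unfolding Omega_def mem_T_Arr tt_def mem_S_Imp by simp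

end

theorem mainTheorem4:
  fixes R :: "'a::countable \<Rightarrow> ('w \<times> 'w) set"
    and V :: "'p::countable \<Rightarrow> 'w set"
    and C :: "'i::countable \<Rightarrow> 'w \<Rightarrow> ('w \<times> 'w) set"
    and S :: "('p, 'a, 'i) fm \<Rightarrow> 'w set"
    and T :: "('p, 'a, 'i) prog \<Rightarrow> ('w \<times> 'w) set"
    and \<phi> \<psi> \<theta> :: "('p, 'a, 'i) fm"
  assumes "is_interp R V C S T"
  shows "S (Box (Arr \<phi> \<psi>) \<theta>)
           = S (Disj (Conj \<phi> (Box Omega (Box (Test \<psi>) \<theta>))) (Box Omega \<theta>))
     \<and> S (Neg (Box (Arr \<phi> \<psi>) \<theta>))
           = S (Disj (Conj (Neg \<phi>) (Neg (Box Omega \<theta>))) (Neg (Box Omega (Box (Test \<psi>) \<theta>))))"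
proof -
  note interp = assms
  have box_arr: "w \<in> S (Box (Arr \<phi> \<psi>) \<theta>) \<longleftrightarrow>
      (\<forall>w'. (w, w') \<in> sigma_plus_rel T \<and> (w \<in> S \<phi> \<longrightarrow> w' \<in> S \<psi>) \<longrightarrow> w' \<in> S \<theta>)" for w
    by (simp add: mem_S_Box[OF interp] mem_T_Arr[OF interp])
  have box_omega_test: "w \<in> S (Box Omega (Box (Test \<psi>) \<theta>)) \<longleftrightarrow>
      (\<forall>w'. (w, w') \<in> sigma_plus_rel T \<longrightarrow> w' \<in> S \<psi> \<longrightarrow> w' \<in> S \<theta>)" for w
    by (simp add: mem_S_Box[OF interp] mem_T_Omega[OF interp] mem_T_Test[OF interp])
  have box_omega: "w \<in> S (Box Omega \<theta>) \<longleftrightarrow> (\<forall>w'. (w, w') \<in> sigma_plus_rel T \<longrightarrow> w' \<in> S \<theta>)" for w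
    by (simp add: mem_S_Box[OF interp] mem_T_Omega[OF interp])
  show ?thesis
    unfolding set_eq_iff mem_S_Disj[OF interp] mem_S_Conj[OF interp] mem_S_Neg[OF interp]
      box_arr box_omega_test box_omega
    by blast
qed

end
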